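(* Let $H=(V,E)$ be a finite graph, $p\in(0,1)$, $q>1$, and let $P_{CM}$ be the transition matrix of the CM dynamics on $H$. With $M$, $M^*$ and $T_e$ ($e\in E$) as defined in the context, $$P_{CM}=M\Big(\prod_{e\in E}T_e\Big)M^*.$$
   Context: Configurations are $A\subseteq E$; $c(A)$ is the number of connected components of $(V,A)$. CM dynamics on $H$: from $A$, (i) activate each connected component of $(V,A)$ independently with probability $1/q$; (ii) remove all edges joining two active vertices; (iii) add each edge joining two active vertices independently with probability $p$. Let $\Omega_E=\{A\subseteq E\}$, $\Omega_V=\{0,1\}^V$ (1 = active, 0 = inactive), $\Omega_J=\Omega_V\times\Omega_E$. For $\sigma\in\Omega_V$, $E(\sigma)=\{(u,v)\in E:\sigma(u)=\sigma(v)\}$, and $f(\sigma,A)$ is the number of connected components of $(V,A)$ whose vertices are inactive. Define $M(B,(\sigma,A))=\mathbf 1(A=B)\mathbf 1(A\subseteq E(\sigma))(q-1)^{f(\sigma,A)}q^{-c(A)}$, $M^*((\sigma,A),B)=\mathbf 1(A=B)$, and for $e=(u,v)\in E$, $T_e((\sigma,A),(\tau,B))=\mathbf 1(\sigma=\tau)\cdot t$ where $t=p$ if $B=A\cup\{e\}$ and $\sigma(u)=\sigma(v)=1$; $t=1-p$ if $B=A\setminus\{e\}$ and $\sigma(u)=\sigma(v)=1$; and, if $\sigma(u)=0$ or $\sigma(v)=0$, $t=1$ if $B=A$ and $t=0$ otherwise (and $t=0$ in all other cases, i.e. $T_e$ only changes edge $e$). The $T_e$ commute, so the product order is irrelevant.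 *)

theory Defs
  imports Complex_Main "HOL-Library.FuncSet"
begin

definition conn :: "'v set \<Rightarrow> ('v \<times> 'v) set \<Rightarrow> ('v \<times> 'v) set" where
  "conn V A = {(x,y). x \<in> V \<and> y \<in> V \<and> (x,y) \<in> (A \<union> A\<inverse>)\<^sup>*}"

definition components :: "'v set \<Rightarrow> ('v \<times> 'v) set \<Rightarrow> 'v set set" where
  "components V A = V // conn V A"

definition ncomp :: "'v set \<Rightarrow> ('v \<times> 'v) set \<Rightarrow> nat" where
  "ncomp V A = card (components V A)"

text \<open>Omega_E, Omega_V = {0,1}^V (1 = active), Omega_J = Omega_V x Omega_E.\<close>
definition OmegaE :: "('v \<times> 'v) set \<Rightarrow> ('v \<times> 'v) set set" where
  "OmegaE E = Pow E"

definition OmegaV :: "'v set \<Rightarrow> ('v \<Rightarrow> nat) set" where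
  "OmegaV V = PiE V (\<lambda>_. {0, 1})"

definition OmegaJ :: "'v set \<Rightarrow> ('v \<times> 'v) set \<Rightarrow> (('v \<Rightarrow> nat) \<times> ('v \<times> 'v) set) set" where
  "OmegaJ V E = OmegaV V \<times> OmegaE E"

definition Esig :: "('v \<times> 'v) set \<Rightarrow> ('v \<Rightarrow> nat) \<Rightarrow> ('v \<times> 'v) set" where
  "Esig E \<sigma> = {(u,v) \<in> E. \<sigma> u = \<sigma> v}"

definition finact :: "'v set \<Rightarrow> ('v \<Rightarrow> nat) \<Rightarrow> ('v \<times> 'v) set \<Rightarrow> nat" where
  "finact V \<sigma> A = card {C \<in> components V A. \<forall>v\<in>C. \<sigma> v = 0}"

definition Mmat :: "'v set \<Rightarrow> ('v \<times> 'v) set \<Rightarrow> real \<Rightarrow>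
    ('v \<times> 'v) set \<Rightarrow> (('v \<Rightarrow> nat) \<times> ('v \<times> 'v) set) \<Rightarrow> real" where
  "Mmat V E q B J = (case J of (\<sigma>, A) \<Rightarrow>
     (if A = B then 1 else 0) * (if A \<subseteq> Esig E \<sigma> then 1 else 0)
       * (q - 1) ^ finact V \<sigma> A * q powi (- int (ncomp V A)))"

definition Mstar :: "(('v \<Rightarrow> nat) \<times> ('v \<times> 'v) set) \<Rightarrow> ('v \<times> 'v) set \<Rightarrow> real" where
  "Mstar J B = (if snd J = B then 1 else 0)"

definition Tmat :: "real \<Rightarrow> ('v \<times> 'v) \<Rightarrow>
    (('v \<Rightarrow> nat) \<times> ('v \<times> 'v) set) \<Rightarrow> (('v \<Rightarrow> nat) \<times> ('v \<times> 'v) set) \<Rightarrow> real" where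
  "Tmat p e X Y = (case X of (\<sigma>, A) \<Rightarrow> case Y of (\<tau>, B) \<Rightarrow>
     (if \<sigma> = \<tau> then
        (if \<sigma> (fst e) = 1 \<and> \<sigma> (snd e) = 1 then
           (if B = A \<union> {e} then p else if B = A - {e} then 1 - p else 0)
         else (if B = A then 1 else 0))
      else 0))"

definition matmul :: "'s set \<Rightarrow> ('a \<Rightarrow> 's \<Rightarrow> real) \<Rightarrow> ('s \<Rightarrow> 'b \<Rightarrow> real) \<Rightarrow> 'a \<Rightarrow> 'b \<Rightarrow> real" where
  "matmul S X Y = (\<lambda>a b. \<Sum>c\<in>S. X a c * Y c b)"

definition idmat :: "'s \<Rightarrow> 's \<Rightarrow> real" where
  "idmat a b = (if a = b then 1 else 0)"

definition matprod :: "'s set \<Rightarrow> ('s \<Rightarrow> 's \<Rightarrow> real) list \<Rightarrow> 's \<Rightarrow> 's \<Rightarrow> real" where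
  "matprod S Xs = foldr (matmul S) Xs idmat"

text \<open>Transition matrix of the CM dynamics, written out from steps (i)-(iii):
  sum over activation patterns sigma (constant on components of (V,A); each component is active
  independently with probability 1/q), then edges between two active vertices are removed and
  each such edge of E is added independently with probability p.\<close>
definition Eact :: "('v \<times> 'v) set \<Rightarrow> ('v \<Rightarrow> nat) \<Rightarrow> ('v \<times> 'v) set" where
  "Eact E \<sigma> = {(u,v) \<in> E. \<sigma> u = 1 \<and> \<sigma> v = 1}"

definition PCM :: "'v set \<Rightarrow> ('v \<times> 'v) set \<Rightarrow> real \<Rightarrow> real \<Rightarrow>
    ('v \<times> 'v) set \<Rightarrow> ('v \<times> 'v) set \<Rightarrow> real" where
  "PCM V E p q A B = (\<Sum>\<sigma>\<in>OmegaV V.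
     (if \<forall>C\<in>components V A. \<forall>u\<in>C. \<forall>v\<in>C. \<sigma> u = \<sigma> v then
        (1 / q) ^ card {C \<in> components V A. \<forall>v\<in>C. \<sigma> v = 1}
        * (1 - 1 / q) ^ card {C \<in> components V A. \<forall>v\<in>C. \<sigma> v = 0}
        * (if A - Eact E \<sigma> = B - Eact E \<sigma>
           then p ^ card (B \<inter> Eact E \<sigma>) * (1 - p) ^ card (Eact E \<sigma> - B)
           else 0)
      else 0))"

end

theory Submission
  imports Defs
begin

text \<open>Conditioned on the activation pattern \<open>\<sigma>\<close>, the edge part of a CM step resamples every
  active edge independently, and this is exactly what the commuting factors \<open>T\<^sub>e\<close> do one edge at a
  time: the product of the \<open>T\<^sub>e\<close> maps \<open>(\<sigma>, A)\<close> to \<open>(\<sigma>, B)\<close> with the probability that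
  resampling the active edges turns \<open>A\<close> into \<open>B\<close>. The row of \<open>M\<close> at \<open>A\<close> is supported on the
  states \<open>(\<sigma>, A)\<close> with \<open>\<sigma>\<close> constant on the components of \<open>(V, A)\<close>, where its entry
  \<open>(q - 1)^f(\<sigma>, A) q^-c(A)\<close> is precisely the probability of that activation pattern;
  finally \<open>M\<^sup>*\<close> forgets \<open>\<sigma>\<close>, which sums over all activation patterns.\<close>

lemma matprod_Cons: "matprod S (X # Xs) = matmul S X (matprod S Xs)"
  by (simp add: matprod_def)

lemma matmul_eq_sum_support:
  assumes "finite S" "T \<subseteq> S" "\<And>c. c \<in> S - T \<Longrightarrow> X a c * Y c d = 0"
  shows "matmul S X Y a d = (\<Sum>c\<in>T. X a c * Y c d)"
  unfolding matmul_def using assms by (intro sum.mono_neutral_right) auto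

lemma matmul_Mstar:
  assumes "finite E" "B \<in> OmegaE E"
  shows "matmul (OmegaJ V E) W Mstar a B = (\<Sum>\<sigma>\<in>OmegaV V. W a (\<sigma>, B))"
proof -
  have "finite (OmegaE E)"
    using assms(1) by (simp add: OmegaE_def)
  then have "(\<Sum>\<sigma>\<in>OmegaV V. \<Sum>B'\<in>OmegaE E. W a (\<sigma>, B') * Mstar (\<sigma>, B') B)
      = (\<Sum>\<sigma>\<in>OmegaV V. W a (\<sigma>, B))"
    using assms(2) by (simp add: Mstar_def if_distrib[of "\<lambda>x. _ * x"] cong: if_cong)
  then show ?thesis
    by (simp add: matmul_def OmegaJ_def sum.cartesian_product)
qed

lemma finite_OmegaV: "finite V \<Longrightarrow> finite (OmegaV V)"
  by (simp add: OmegaV_def finite_PiE)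

lemma finite_OmegaJ: "finite V \<Longrightarrow> finite E \<Longrightarrow> finite (OmegaJ V E)"
  by (simp add: OmegaJ_def OmegaE_def finite_OmegaV)

definition resample_prob :: "real \<Rightarrow> ('v \<times> 'v) set \<Rightarrow> ('v \<times> 'v) set \<Rightarrow> ('v \<times> 'v) set \<Rightarrow> real"
  where "resample_prob p S A B =
    (if A - S = B - S then p ^ card (B \<inter> S) * (1 - p) ^ card (S - B) else 0)"

lemma resample_prob_empty: "resample_prob p {} A B = idmat A B"
  by (simp add: resample_prob_def idmat_def)

lemma resample_prob_insert:
  assumes "finite S" "e \<notin> S"
  shows "resample_prob p (insert e S) A B
    = p * resample_prob p S (A \<union> {e}) B + (1 - p) * resample_prob p S (A - {e}) B"
proof (cases "e \<in> B")
  case True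
  have "(A \<union> {e} - S = B - S) = (A - insert e S = B - insert e S)"
    and "A - {e} - S \<noteq> B - S"
    and "card (B \<inter> insert e S) = Suc (card (B \<inter> S))"
    and "insert e S - B = S - B"
    using True assms by auto
  then show ?thesis by (simp add: resample_prob_def)
next
  case False
  have "(A - {e} - S = B - S) = (A - insert e S = B - insert e S)"
    and "A \<union> {e} - S \<noteq> B - S"
    and "B \<inter> insert e S = B \<inter> S"
    and "card (insert e S - B) = Suc (card (S - B))"
    using False assms by (auto simp: insert_Diff_if)
  then show ?thesis by (simp add: resample_prob_def)
qed

lemma finite_Eact: "finite F \<Longrightarrow> finite (Eact F \<sigma>)"
  by (rule finite_subset[of _ F]) (auto simp: Eact_def)

lemma Eact_insert:
  "Eact (insert e F) \<sigma>
    = (if \<sigma> (fst e) = 1 \<and> \<sigma> (snd e) = 1 then insert e (Eact F \<sigma>) else Eact F \<sigma>)"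
  by (cases e) (auto simp: Eact_def)

lemma matprod_Tmat:
  assumes "finite V" "finite E" "set es \<subseteq> E" "distinct es"
    and "\<sigma> \<in> OmegaV V" "A \<subseteq> E"
  shows "matprod (OmegaJ V E) (map (Tmat p) es) (\<sigma>, A) (\<tau>, B)
    = (if \<sigma> = \<tau> then resample_prob p (Eact (set es) \<sigma>) A B else 0)"
  using assms(3,4,6)
proof (induction es arbitrary: A)
  case Nil
  then show ?case by (simp add: matprod_def idmat_def Eact_def resample_prob_empty)
next
  case (Cons e es)
  let ?J = "OmegaJ V E"
  let ?P = "matprod ?J (map (Tmat p) es)"
  have IH: "?P (\<sigma>, A') (\<tau>, B) = (if \<sigma> = \<tau> then resample_prob p (Eact (set es) \<sigma>) A' B else 0)"
    if "A' \<subseteq> E" for A'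
    using Cons that by auto
  have fin: "finite ?J" using assms(1,2) by (rule finite_OmegaJ)
  have eE: "e \<in> E" and e_new: "e \<notin> Eact (set es) \<sigma>"
    using Cons.prems by (auto simp: Eact_def)
  have "matprod ?J (map (Tmat p) (e # es)) (\<sigma>, A) (\<tau>, B) = matmul ?J (Tmat p e) ?P (\<sigma>, A) (\<tau>, B)"
    by (simp add: matprod_Cons)
  also have "\<dots> = (if \<sigma> = \<tau> then resample_prob p (Eact (set (e # es)) \<sigma>) A B else 0)"
  proof (cases "\<sigma> (fst e) = 1 \<and> \<sigma> (snd e) = 1")
    case True
    have J: "{(\<sigma>, A \<union> {e}), (\<sigma>, A - {e})} \<subseteq> ?J"
      using Cons.prems eE assms(5) by (auto simp: OmegaJ_def OmegaE_def)
    have support: "Tmat p e (\<sigma>, A) c * ?P c (\<tau>, B) = 0"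
      if "c \<in> ?J - {(\<sigma>, A \<union> {e}), (\<sigma>, A - {e})}" for c
      using that by (cases c) (auto simp: Tmat_def)
    have "insert e A \<noteq> A - {e}" by auto
    then have "matmul ?J (Tmat p e) ?P (\<sigma>, A) (\<tau>, B)
        = Tmat p e (\<sigma>, A) (\<sigma>, A \<union> {e}) * ?P (\<sigma>, A \<union> {e}) (\<tau>, B)
          + Tmat p e (\<sigma>, A) (\<sigma>, A - {e}) * ?P (\<sigma>, A - {e}) (\<tau>, B)"
      by (subst matmul_eq_sum_support[where X = "Tmat p e" and Y = ?P, OF fin J support])
        simp_all
    also have "\<dots> = (if \<sigma> = \<tau> then p * resample_prob p (Eact (set es) \<sigma>) (A \<union> {e}) B
        + (1 - p) * resample_prob p (Eact (set es) \<sigma>) (A - {e}) B else 0)"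
    proof -
      have "A \<union> {e} \<subseteq> E" "A - {e} \<subseteq> E" using Cons.prems eE by auto
      moreover have "Tmat p e (\<sigma>, A) (\<sigma>, A \<union> {e}) = p" "Tmat p e (\<sigma>, A) (\<sigma>, A - {e}) = 1 - p"
        using True by (auto simp: Tmat_def)
      ultimately show ?thesis by (simp add: IH)
    qed
    also have "\<dots> = (if \<sigma> = \<tau> then resample_prob p (Eact (set (e # es)) \<sigma>) A B else 0)"
    proof -
      have step: "p * resample_prob p (Eact (set es) \<sigma>) (A \<union> {e}) B
          + (1 - p) * resample_prob p (Eact (set es) \<sigma>) (A - {e}) B
          = resample_prob p (Eact (set (e # es)) \<sigma>) A B"
        using True by (simp add: Eact_insert resample_prob_insert[OF finite_Eact e_new])
      show ?thesis by (simp only: step)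
    qed
    finally show ?thesis .
  next
    case False
    have J: "{(\<sigma>, A)} \<subseteq> ?J"
      using Cons.prems assms(5) by (auto simp: OmegaJ_def OmegaE_def)
    have support: "Tmat p e (\<sigma>, A) c * ?P c (\<tau>, B) = 0" if "c \<in> ?J - {(\<sigma>, A)}" for c
      using that False by (cases c) (auto simp: Tmat_def)
    have "Tmat p e (\<sigma>, A) (\<sigma>, A) = 1" using False by (auto simp: Tmat_def)
    then have "matmul ?J (Tmat p e) ?P (\<sigma>, A) (\<tau>, B) = ?P (\<sigma>, A) (\<tau>, B)"
      by (subst matmul_eq_sum_support[where X = "Tmat p e" and Y = ?P, OF fin J support])
        simp_all
    moreover have "Eact (set (e # es)) \<sigma> = Eact (set es) \<sigma>"
      using False by (auto simp: Eact_insert)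
    ultimately show ?thesis
      by (simp only: IH[OF \<open>A \<subseteq> E\<close>])
  qed
  finally show ?case .
qed

lemma rtrancl_sym_const:
  assumes "(x, y) \<in> (A \<union> A\<inverse>)\<^sup>*" "\<forall>(u, v)\<in>A. \<sigma> u = \<sigma> v"
  shows "\<sigma> x = \<sigma> y"
  using assms by (induction rule: rtrancl_induct) auto

lemma components_memE:
  assumes "C \<in> components V A"
  obtains x where "x \<in> V" "C = conn V A `` {x}"
  using assms unfolding components_def by (auto elim: quotientE)

lemma subset_Esig_iff_constant_on_components:
  assumes "A \<subseteq> E" "E \<subseteq> V \<times> V"
  shows "A \<subseteq> Esig E \<sigma> \<longleftrightarrow> (\<forall>C\<in>components V A. \<forall>u\<in>C. \<forall>v\<in>C. \<sigma> u = \<sigma> v)"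
proof
  assume "A \<subseteq> Esig E \<sigma>"
  then have edges: "\<forall>(u, v)\<in>A. \<sigma> u = \<sigma> v" by (auto simp: Esig_def)
  show "\<forall>C\<in>components V A. \<forall>u\<in>C. \<forall>v\<in>C. \<sigma> u = \<sigma> v"
  proof (intro ballI)
    fix C u v assume "C \<in> components V A" "u \<in> C" "v \<in> C"
    moreover obtain x where "C = conn V A `` {x}"
      using \<open>C \<in> components V A\<close> by (rule components_memE)
    ultimately have "(x, u) \<in> (A \<union> A\<inverse>)\<^sup>*" "(x, v) \<in> (A \<union> A\<inverse>)\<^sup>*"
      by (auto simp: conn_def)
    then show "\<sigma> u = \<sigma> v" using rtrancl_sym_const edges by metis
  qed
next
  assume const: "\<forall>C\<in>components V A. \<forall>u\<in>C. \<forall>v\<in>C. \<sigma> u = \<sigma> v"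
  show "A \<subseteq> Esig E \<sigma>"
  proof (clarify)
    fix u v assume uv: "(u, v) \<in> A"
    then have "u \<in> V" "v \<in> V" using assms by auto
    have "conn V A `` {u} \<in> components V A"
      unfolding components_def using \<open>u \<in> V\<close> by (rule quotientI)
    moreover have "u \<in> conn V A `` {u}" "v \<in> conn V A `` {u}"
      using uv \<open>u \<in> V\<close> \<open>v \<in> V\<close> by (auto simp: conn_def)
    ultimately have "\<sigma> u = \<sigma> v" using const by blast
    then show "(u, v) \<in> Esig E \<sigma>"
      using uv assms(1) by (auto simp: Esig_def)
  qed
qed

lemma components_nonempty:
  assumes "C \<in> components V A"
  obtains x where "x \<in> V" "x \<in> C"
proof -
  obtain x where "x \<in> V" "C = conn V A `` {x}"
    using assms by (rule components_memE)
  then have "x \<in> C" by (simp add: conn_def)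
  then show thesis using that \<open>x \<in> V\<close> by blast
qed

lemma finite_components: "finite V \<Longrightarrow> finite (components V A)"
  unfolding components_def by (rule finite_quotient) (auto simp: conn_def)

lemma activation_prob_eq:
  fixes q :: real
  assumes "finite V" "q \<noteq> 0" "\<sigma> \<in> OmegaV V"
    and const: "\<forall>C\<in>components V A. \<forall>u\<in>C. \<forall>v\<in>C. \<sigma> u = \<sigma> v"
  shows "(1 / q) ^ card {C \<in> components V A. \<forall>v\<in>C. \<sigma> v = 1}
        * (1 - 1 / q) ^ card {C \<in> components V A. \<forall>v\<in>C. \<sigma> v = 0}
     = (q - 1) ^ finact V \<sigma> A * q powi (- int (ncomp V A))"
proof -
  let ?K = "components V A"
  let ?P = "{C \<in> ?K. \<forall>v\<in>C. \<sigma> v = 1}"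
  let ?N = "{C \<in> ?K. \<forall>v\<in>C. \<sigma> v = 0}"
  have split: "?K = ?P \<union> ?N"
  proof (intro equalityI subsetI)
    fix C assume C: "C \<in> ?K"
    then obtain x where "x \<in> V" "x \<in> C" by (rule components_nonempty)
    have "\<sigma> x = 0 \<or> \<sigma> x = 1"
      using \<open>x \<in> V\<close> assms(3) by (auto simp: OmegaV_def PiE_def)
    moreover have "\<forall>v\<in>C. \<sigma> v = \<sigma> x" using const C \<open>x \<in> C\<close> by metis
    ultimately show "C \<in> ?P \<union> ?N" using C by auto
  qed blast
  have disjoint: "?P \<inter> ?N = {}" by (auto elim: components_nonempty)
  have ncomp: "ncomp V A = card ?P + card ?N"
    unfolding ncomp_def
    by (subst split) (rule card_Un_disjoint, use finite_components[OF assms(1)] disjoint in auto)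
  have "(1 / q) ^ card ?P * (1 - 1 / q) ^ card ?N = (q - 1) ^ card ?N / q ^ (card ?P + card ?N)"
    using assms(2) by (simp add: power_add field_simps)
  also have "\<dots> = (q - 1) ^ finact V \<sigma> A * q powi (- int (ncomp V A))"
    by (simp only: ncomp finact_def power_int_minus power_int_of_nat divide_inverse)
  finally show ?thesis .
qed

lemma Mmat_diag_eq_activation_prob:
  fixes q :: real
  assumes "finite V" "E \<subseteq> V \<times> V" "A \<subseteq> E" "q \<noteq> 0" "\<sigma> \<in> OmegaV V"
  shows "Mmat V E q A (\<sigma>, A) =
    (if \<forall>C\<in>components V A. \<forall>u\<in>C. \<forall>v\<in>C. \<sigma> u = \<sigma> v then
        (1 / q) ^ card {C \<in> components V A. \<forall>v\<in>C. \<sigma> v = 1}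
        * (1 - 1 / q) ^ card {C \<in> components V A. \<forall>v\<in>C. \<sigma> v = 0}
     else 0)"
proof (cases "\<forall>C\<in>components V A. \<forall>u\<in>C. \<forall>v\<in>C. \<sigma> u = \<sigma> v")
  case True
  then have "A \<subseteq> Esig E \<sigma>"
    using subset_Esig_iff_constant_on_components[OF assms(3,2)] by blast
  then show ?thesis
    by (simp only: if_P[OF True] Mmat_def activation_prob_eq[OF assms(1,4,5) True]) simp
next
  case False
  then have "\<not> A \<subseteq> Esig E \<sigma>"
    using subset_Esig_iff_constant_on_components[OF assms(3,2)] by blast
  then show ?thesis
    by (simp only: if_not_P[OF False]) (simp add: Mmat_def)
qed

lemma PCM_eq_sum_activations:
  assumes "finite V" "E \<subseteq> V \<times> V" "A \<subseteq> E" "q \<noteq> 0"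
  shows "PCM V E p q A B = (\<Sum>\<sigma>\<in>OmegaV V. Mmat V E q A (\<sigma>, A) * resample_prob p (Eact E \<sigma>) A B)"
  unfolding PCM_def resample_prob_def[symmetric]
proof (rule sum.cong)
  fix \<sigma> assume "\<sigma> \<in> OmegaV V"
  show "(if \<forall>C\<in>components V A. \<forall>u\<in>C. \<forall>v\<in>C. \<sigma> u = \<sigma> v then
        (1 / q) ^ card {C \<in> components V A. \<forall>v\<in>C. \<sigma> v = 1}
        * (1 - 1 / q) ^ card {C \<in> components V A. \<forall>v\<in>C. \<sigma> v = 0}
        * resample_prob p (Eact E \<sigma>) A B
      else 0) = Mmat V E q A (\<sigma>, A) * resample_prob p (Eact E \<sigma>) A B"
    by (simp only: Mmat_diag_eq_activation_prob[OF assms \<open>\<sigma> \<in> OmegaV V\<close>]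
        if_distrib[of "\<lambda>x. x * resample_prob p (Eact E \<sigma>) A B"] mult_zero_left)
qed simp

lemma matmul_Mmat_Tprod:
  assumes "finite V" "finite E" "set es \<subseteq> E" "distinct es"
    and "\<sigma> \<in> OmegaV V" "A \<subseteq> E"
  shows "matmul (OmegaJ V E) (Mmat V E q) (matprod (OmegaJ V E) (map (Tmat p) es)) A (\<sigma>, B)
    = Mmat V E q A (\<sigma>, A) * resample_prob p (Eact (set es) \<sigma>) A B"
proof -
  let ?J = "OmegaJ V E"
  let ?P = "matprod ?J (map (Tmat p) es)"
  note P_eq = matprod_Tmat[OF assms(1-4)]
  have J: "{(\<sigma>, A)} \<subseteq> ?J" using assms(5,6) by (simp add: OmegaJ_def OmegaE_def)
  have support: "Mmat V E q A c * ?P c (\<sigma>, B) = 0" if "c \<in> ?J - {(\<sigma>, A)}" for c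
  proof (cases c)
    case (Pair \<tau> A')
    then show ?thesis
      using that P_eq[of \<tau> A' p \<sigma> B] by (auto simp: Mmat_def OmegaJ_def OmegaE_def)
  qed
  have "?P (\<sigma>, A) (\<sigma>, B) = resample_prob p (Eact (set es) \<sigma>) A B"
    using P_eq[OF assms(5,6)] by simp
  then show ?thesis
    by (subst matmul_eq_sum_support[where X = "Mmat V E q" and Y = ?P,
          OF finite_OmegaJ[OF assms(1,2)] J support]) simp_all
qed

theorem mainTheorem5:
  fixes V :: "'v set" and E :: "('v \<times> 'v) set" and p q :: real
    and es :: "('v \<times> 'v) list"
  assumes "finite V" and "E \<subseteq> V \<times> V"
    and "0 < p" and "p < 1" and "1 < q"
    and "distinct es" and "set es = E"
    and "A \<in> OmegaE E" and "B \<in> OmegaE E"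
  shows "PCM V E p q A B =
    matmul (OmegaJ V E)
      (matmul (OmegaJ V E) (Mmat V E q) (matprod (OmegaJ V E) (map (Tmat p) es)))
      Mstar A B"
proof -
  have finE: "finite E" using assms(1,2) by (metis finite_cartesian_product finite_subset)
  have AE: "A \<subseteq> E" using assms(8) by (simp add: OmegaE_def)
  have "PCM V E p q A B = (\<Sum>\<sigma>\<in>OmegaV V. Mmat V E q A (\<sigma>, A) * resample_prob p (Eact E \<sigma>) A B)"
    using assms(5) by (intro PCM_eq_sum_activations[OF assms(1,2) AE]) simp
  also have "\<dots> = (\<Sum>\<sigma>\<in>OmegaV V.
      matmul (OmegaJ V E) (Mmat V E q) (matprod (OmegaJ V E) (map (Tmat p) es)) A (\<sigma>, B))"
    using matmul_Mmat_Tprod[OF assms(1) finE _ assms(6) _ AE] assms(7) by simp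
  also have "\<dots> = matmul (OmegaJ V E)
      (matmul (OmegaJ V E) (Mmat V E q) (matprod (OmegaJ V E) (map (Tmat p) es))) Mstar A B"
    by (rule matmul_Mstar[OF finE assms(9), symmetric])
  finally show ?thesis .
qed

end
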